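(* Let $n\ge 1$ and let $\mathcal{C}$ be an $n$-qubit quantum channel (CPTP map) with entanglement fidelity $F(\mathcal{C})\neq 0$. Let $\mathcal{E}=\{(p_i,U_i)\}_{i=0}^{K-1}$ be an ensemble of $n$-qubit unitaries such that $\mathbb{E}_{\mathcal{E}}(\mathcal{C})=\mathcal{D}_{F(\mathcal{C})}$. Let $\mathcal{V}=\{((2^n+1)^{-1},V_j^\dagger)\}_{j=0}^{2^n}$ and $\mathcal{M}$ be as in the context. Then the $n$-qubit identity channel admits the quasiprobability decomposition $$\mathcal{I}^{\otimes n}=\frac{1}{F(\mathcal{C})}\,\mathbb{E}_{\mathcal{E}}(\mathcal{C})-\left(\frac{1}{F(\mathcal{C})}-1\right)\mathbb{E}_{\mathcal{V}}(\mathcal{M}).$$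
   Context: Entanglement fidelity: $F(\mathcal{C})=\langle\Phi_n|(\mathcal{I}^{\otimes n}\otimes\mathcal{C})(|\Phi_n\rangle\langle\Phi_n|)|\Phi_n\rangle$ with $|\Phi_n\rangle=2^{-n/2}\sum_{\vec k\in\{0,1\}^n}|\vec k\rangle|\vec k\rangle$. Pauli operators: for $\vec a\in\{0,1\}^n$, $X_{\vec a}=\bigotimes_i X^{a_i}$, $Z_{\vec a}=\bigotimes_i Z^{a_i}$; $\mathcal{Q}_n=\{X_{\vec x}Z_{\vec z}\}$ is the Pauli group modulo phases and $\mathcal{Q}_n^*=\mathcal{Q}_n\setminus\{I^{\otimes n}\}$. Depolarizing channel: $\mathcal{D}_p(\varphi)=p\varphi+\frac{1-p}{2^{2n}-1}\sum_{P\in\mathcal{Q}_n^*}P\varphi P$. For an ensemble $\mathcal{E}=\{(p_i,U_i)\}$, the twirl is $\mathbb{E}_{\mathcal{E}}(\mathcal{C})(\rho)=\sum_ip_iU_i^\dagger\mathcal{C}(U_i\rho U_i^\dagger)U_i$. The set $\mathcal{Q}_n^*$ is partitioned into $2^n+1$ maximally commuting subsets $S_0,\dots,S_{2^n}$ (each of $2^n-1$ pairwise commuting operators), and $V_j$ is a unitary with $S_j=\{s_{j,\vec a}V_jZ_{\vec a}V_j^\dagger:\vec a\ne\vec 0\}$, $s_{j,\vec a}\in\{\pm1\}$. $\mathcal{V}$ is the uniform ensemble over $V_0^\dagger,\dots,V_{2^n}^\dagger$, so $\mathbb{E}_{\mathcal{V}}(\mathcal{M})(\rho)=\frac{1}{2^n+1}\sum_jV_j\mathcal{M}(V_j^\dagger\rho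 V_j)V_j^\dagger$. $\mathcal{M}(\rho)=\sum_{\vec k}\operatorname{tr}[|\vec k\rangle\langle\vec k|\rho]\rho_{\vec k}$ with $\rho_{\vec k}=\frac{1}{2^n-1}\sum_{\vec l\neq\vec k}|\vec l\rangle\langle\vec l|$. *)

theory Defs
  imports Complex_Main "Jordan_Normal_Form.Matrix"
begin

text \<open>n-qubit operators are complex 2^n x 2^n matrices; the computational basis
  state |k> (k < 2^n) has qubit i equal to bit i of k.\<close>

abbreviation dimq :: "nat \<Rightarrow> nat" where "dimq n \<equiv> 2 ^ n"

definition adj :: "complex mat \<Rightarrow> complex mat" where
  "adj A = mat (dim_col A) (dim_row A) (\<lambda>(i,j). cnj (A $$ (j,i)))"

definition unitary_q :: "nat \<Rightarrow> complex mat \<Rightarrow> bool" where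
  "unitary_q n U \<longleftrightarrow> U \<in> carrier_mat (dimq n) (dimq n) \<and>
     adj U * U = 1\<^sub>m (dimq n) \<and> U * adj U = 1\<^sub>m (dimq n)"

definition trace_q :: "complex mat \<Rightarrow> complex" where
  "trace_q A = (\<Sum>i<dim_row A. A $$ (i,i))"

definition psd :: "complex mat \<Rightarrow> bool" where
  "psd A \<longleftrightarrow> dim_row A = dim_col A \<and>
     (\<forall>v :: nat \<Rightarrow> complex.
        let q = (\<Sum>i<dim_row A. \<Sum>j<dim_row A. cnj (v i) * A $$ (i,j) * v j)
        in Im q = 0 \<and> Re q \<ge> 0)"

definition ketbra :: "nat \<Rightarrow> nat \<Rightarrow> nat \<Rightarrow> complex mat" where
  "ketbra n k l = mat (dimq n) (dimq n) (\<lambda>(i,j). if i = k \<and> j = l then 1 else 0)"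

text \<open>(id_m \<otimes> C)(X) for X an (m*2^n)x(m*2^n) matrix, the first tensor factor
  indexing the blocks: block (a,b) of the result is C applied to block (a,b) of X.\<close>
definition block_q :: "nat \<Rightarrow> complex mat \<Rightarrow> nat \<Rightarrow> nat \<Rightarrow> complex mat" where
  "block_q n X a b = mat (dimq n) (dimq n) (\<lambda>(i,j). X $$ (a * dimq n + i, b * dimq n + j))"

definition id_tensor :: "nat \<Rightarrow> nat \<Rightarrow> (complex mat \<Rightarrow> complex mat) \<Rightarrow> complex mat \<Rightarrow> complex mat" where
  "id_tensor m n C X = mat (m * dimq n) (m * dimq n)
     (\<lambda>(r,c). C (block_q n X (r div dimq n) (c div dimq n)) $$ (r mod dimq n, c mod dimq n))"

definition channel :: "nat \<Rightarrow> (complex mat \<Rightarrow> complex mat) \<Rightarrow> bool" where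
  "channel n C \<longleftrightarrow>
     (\<forall>\<rho> \<in> carrier_mat (dimq n) (dimq n). C \<rho> \<in> carrier_mat (dimq n) (dimq n)) \<and>
     (\<forall>\<rho> \<in> carrier_mat (dimq n) (dimq n). \<forall>\<sigma> \<in> carrier_mat (dimq n) (dimq n).
         C (\<rho> + \<sigma>) = C \<rho> + C \<sigma>) \<and>
     (\<forall>\<rho> \<in> carrier_mat (dimq n) (dimq n). \<forall>a. C (a \<cdot>\<^sub>m \<rho>) = a \<cdot>\<^sub>m C \<rho>) \<and>
     (\<forall>\<rho> \<in> carrier_mat (dimq n) (dimq n). trace_q (C \<rho>) = trace_q \<rho>) \<and>
     (\<forall>m \<ge> 1. \<forall>X \<in> carrier_mat (m * dimq n) (m * dimq n).
         psd X \<longrightarrow> psd (id_tensor m n C X))"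

text \<open>Maximally entangled state |Phi_n> on 2n qubits (index k*2^n + l for |k>|l>)
  and the entanglement fidelity <Phi|(I \<otimes> C)(|Phi><Phi|)|Phi>.\<close>
definition phi_vec :: "nat \<Rightarrow> nat \<Rightarrow> complex" where
  "phi_vec n r = (if r div dimq n = r mod dimq n then 1 / complex_of_real (sqrt (dimq n)) else 0)"

definition phi_proj :: "nat \<Rightarrow> complex mat" where
  "phi_proj n = mat (dimq n * dimq n) (dimq n * dimq n) (\<lambda>(r,c). phi_vec n r * cnj (phi_vec n c))"

definition ent_fid :: "nat \<Rightarrow> (complex mat \<Rightarrow> complex mat) \<Rightarrow> complex" where
  "ent_fid n C = (\<Sum>r < dimq n * dimq n. \<Sum>c < dimq n * dimq n.
      cnj (phi_vec n r) * id_tensor (dimq n) n C (phi_proj n) $$ (r,c) * phi_vec n c)"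

text \<open>Pauli operator X_x Z_z (x, z bit masks < 2^n):
  X_x Z_z |c> = (-1)^(z.c) |c xor x>.\<close>
definition pauli :: "nat \<Rightarrow> nat \<times> nat \<Rightarrow> complex mat" where
  "pauli n P = (case P of (x, z) \<Rightarrow> mat (dimq n) (dimq n) (\<lambda>(r,c).
     if (\<forall>i<n. bit r i = (bit c i \<noteq> bit x i))
     then (-1) ^ card {i. i < n \<and> bit z i \<and> bit c i} else 0))"

abbreviation Zop :: "nat \<Rightarrow> nat \<Rightarrow> complex mat" where
  "Zop n a \<equiv> pauli n (0, a)"

text \<open>Q_n^*: the non-identity Paulis (modulo phases), labelled by (x,z).\<close>
definition Qstar :: "nat \<Rightarrow> (nat \<times> nat) set" where
  "Qstar n = {(x,z). x < dimq n \<and> z < dimq n \<and> (x,z) \<noteq> (0,0)}"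

definition depol :: "nat \<Rightarrow> complex \<Rightarrow> complex mat \<Rightarrow> complex mat" where
  "depol n p \<phi> = mat (dimq n) (dimq n) (\<lambda>(i,j).
     p * \<phi> $$ (i,j) + (1 - p) / (of_nat (2 ^ (2 * n)) - 1) *
       (\<Sum>P\<in>Qstar n. (pauli n P * \<phi> * adj (pauli n P)) $$ (i,j)))"

definition twirl :: "nat \<Rightarrow> nat \<Rightarrow> (nat \<Rightarrow> real) \<Rightarrow> (nat \<Rightarrow> complex mat)
    \<Rightarrow> (complex mat \<Rightarrow> complex mat) \<Rightarrow> complex mat \<Rightarrow> complex mat" where
  "twirl n K p U C \<rho> = mat (dimq n) (dimq n) (\<lambda>(i,j).
     \<Sum>q<K. complex_of_real (p q) * (adj (U q) * C (U q * \<rho> * adj (U q)) * U q) $$ (i,j))"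

definition rho_k :: "nat \<Rightarrow> nat \<Rightarrow> complex mat" where
  "rho_k n k = mat (dimq n) (dimq n) (\<lambda>(i,j).
     if i = j \<and> i \<noteq> k then 1 / (of_nat (dimq n) - 1) else 0)"

definition meas_M :: "nat \<Rightarrow> complex mat \<Rightarrow> complex mat" where
  "meas_M n \<rho> = mat (dimq n) (dimq n) (\<lambda>(i,j).
     \<Sum>k<dimq n. trace_q (ketbra n k k * \<rho>) * rho_k n k $$ (i,j))"

text \<open>Twirl over the uniform ensemble V = {V_0^dagger, ..., V_{2^n}^dagger}.\<close>
definition twirl_V :: "nat \<Rightarrow> (nat \<Rightarrow> complex mat) \<Rightarrow> (complex mat \<Rightarrow> complex mat)
    \<Rightarrow> complex mat \<Rightarrow> complex mat" where
  "twirl_V n V M \<rho> = mat (dimq n) (dimq n) (\<lambda>(i,j).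
     1 / (of_nat (dimq n) + 1) *
     (\<Sum>j'\<le>dimq n. (V j' * M (adj (V j') * \<rho> * V j') * adj (V j')) $$ (i,j)))"

end

theory Submission
  imports Defs
begin

text \<open>
  By orthogonality of the characters z |-> (-1)^(z.c), the average of P rho P^dagger over the
  4^n - 1 non-identity Paulis P is T(rho) = (2^n tr(rho) I - rho) / (4^n - 1), so the depolarizing
  channel is D_F = F id + (1 - F) T. The twirl of M over V is the same map T: M(sigma) equals
  (tr(sigma) I - diag(sigma)) / (2^n - 1) and diag(sigma) is the average of Z_a sigma Z_a, so
  conjugation by V_j produces the average of W rho W^dagger over W = V_j Z_a V_j^dagger, and for
  a <> 0 these W run, up to phases, exactly through the class S_j. As the classes partition the
  non-identity Paulis, averaging over j gives T. Solving E(C) = D_F = F id + (1 - F) E_V(M) for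
  id gives the decomposition.
\<close>

section \<open>Matrix identities\<close>

lemma index_mult_mat_sum:
  assumes "A \<in> carrier_mat m k" "B \<in> carrier_mat k l" "i < m" "j < l"
  shows "(A * B) $$ (i,j) = (\<Sum>a<k. A $$ (i,a) * B $$ (a,j))"
  using assms by (simp add: scalar_prod_def atLeast0LessThan)

lemma index_mult3_mat_sum:
  assumes A: "A \<in> carrier_mat m k" and B: "B \<in> carrier_mat k l" and C: "C \<in> carrier_mat l q"
    and ij: "i < m" "j < q"
  shows "(A * B * C) $$ (i,j) = (\<Sum>a<k. \<Sum>b<l. A $$ (i,a) * B $$ (a,b) * C $$ (b,j))"
proof -
  have "(A * B * C) $$ (i,j) = (\<Sum>b<l. (A * B) $$ (i,b) * C $$ (b,j))"
    using assms by (intro index_mult_mat_sum) auto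
  also have "\<dots> = (\<Sum>b<l. \<Sum>a<k. A $$ (i,a) * B $$ (a,b) * C $$ (b,j))"
    using assms by (simp add: index_mult_mat_sum[OF A B] sum_distrib_right del: index_mult_mat(1))
  finally show ?thesis by (simp add: sum.swap[of _ "{..<l}"])
qed

lemma mult_carrier_mat_square [simp]:
  "A \<in> carrier_mat N N \<Longrightarrow> B \<in> carrier_mat N N \<Longrightarrow> A * B \<in> carrier_mat N N"
  by (rule mult_carrier_mat)

lemma adj_carrier [simp]: "A \<in> carrier_mat m k \<Longrightarrow> adj A \<in> carrier_mat k m"
  by (simp add: adj_def)

lemma adj_dims [simp]: "dim_row (adj A) = dim_col A" "dim_col (adj A) = dim_row A"
  by (simp_all add: adj_def)

lemma index_adj [simp]: "i < dim_col A \<Longrightarrow> j < dim_row A \<Longrightarrow> adj A $$ (i,j) = cnj (A $$ (j,i))"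
  by (simp add: adj_def)

lemma adj_adj [simp]: "adj (adj A) = A"
  by (rule eq_matI) auto

lemma adj_mult:
  assumes A: "A \<in> carrier_mat m k" and B: "B \<in> carrier_mat k l"
  shows "adj (A * B) = adj B * adj A"
proof (rule eq_matI)
  fix i j assume "i < dim_row (adj B * adj A)" "j < dim_col (adj B * adj A)"
  then have "i < l" "j < m" using assms by auto
  then have "adj (A * B) $$ (i, j) = cnj ((A * B) $$ (j, i))"
    using assms by (intro index_adj) auto
  also have "\<dots> = (adj B * adj A) $$ (i, j)"
    using \<open>i < l\<close> \<open>j < m\<close> assms
    by (simp add: index_mult_mat_sum[OF A B] index_mult_mat_sum[OF adj_carrier[OF B] adj_carrier[OF A]]
        mult.commute del: index_mult_mat(1))
  finally show "adj (A * B) $$ (i, j) = (adj B * adj A) $$ (i, j)" .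
qed (use assms in auto)

lemma adj_one: "adj (1\<^sub>m N) = 1\<^sub>m N"
  by (rule eq_matI) auto

lemma adj_smult: "adj (c \<cdot>\<^sub>m A) = cnj c \<cdot>\<^sub>m adj A"
  by (rule eq_matI) auto

lemma conj_conj_mat:
  assumes V: "V \<in> carrier_mat N N" and P: "P \<in> carrier_mat N N" and rho: "\<rho> \<in> carrier_mat N N"
  shows "(V * P * adj V) * \<rho> * adj (V * P * adj V) = V * (P * (adj V * \<rho> * V) * adj P) * adj V"
proof -
  have "adj (V * P * adj V) = V * (adj P * adj V)"
    using V P by (simp add: adj_mult[of _ N N _ N] adj_mult[OF V P])
  then show ?thesis
    using V P rho by (simp add: assoc_mult_mat[of _ N N _ N _ N])
qed

lemma phase_conj:
  assumes "P \<in> carrier_mat N N" "\<rho> \<in> carrier_mat N N" "cmod c = 1"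
  shows "(c \<cdot>\<^sub>m P) * \<rho> * adj (c \<cdot>\<^sub>m P) = P * \<rho> * adj P"
proof -
  have PR: "P * \<rho> \<in> carrier_mat N N" and P': "adj P \<in> carrier_mat N N" using assms by auto
  have "(c \<cdot>\<^sub>m P) * \<rho> * adj (c \<cdot>\<^sub>m P) = c \<cdot>\<^sub>m (cnj c \<cdot>\<^sub>m (P * \<rho> * adj P))"
    by (simp add: adj_smult mult_smult_assoc_mat[OF assms(1,2)]
        mult_smult_assoc_mat[OF PR smult_carrier_mat[OF P']] mult_smult_distrib[OF PR P'])
  also have "\<dots> = P * \<rho> * adj P"
    using complex_norm_square[of c] assms(3) by (intro eq_matI) (simp_all add: mult.assoc[symmetric])
  finally show ?thesis .
qed

lemma conj_diagonal_entry:
  assumes V: "V \<in> carrier_mat N N" and D: "D \<in> carrier_mat N N"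
    and diag: "\<And>a b. a < N \<Longrightarrow> b < N \<Longrightarrow> a \<noteq> b \<Longrightarrow> D $$ (a,b) = 0"
    and r: "r < N" and s: "s < N"
  shows "(V * D * adj V) $$ (r,s) = (\<Sum>a<N. V $$ (r,a) * D $$ (a,a) * cnj (V $$ (s,a)))"
proof -
  have "(\<Sum>b<N. V $$ (r,a) * D $$ (a,b) * cnj (V $$ (s,b))) = V $$ (r,a) * D $$ (a,a) * cnj (V $$ (s,a))"
    if a: "a < N" for a
  proof -
    have "(\<Sum>b<N. V $$ (r,a) * D $$ (a,b) * cnj (V $$ (s,b)))
        = (\<Sum>b<N. if b = a then V $$ (r,a) * D $$ (a,a) * cnj (V $$ (s,a)) else 0)"
      using a diag by (intro sum.cong) auto
    then show ?thesis using a by simp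
  qed
  then show ?thesis
    using assms by (simp add: index_mult3_mat_sum[OF V D adj_carrier[OF V]] del: index_mult_mat(1))
qed

lemma sum_conj_entry:
  assumes V: "V \<in> carrier_mat N N" and B: "\<And>z. z \<in> Z \<Longrightarrow> B z \<in> carrier_mat N N"
    and r: "r < N" and s: "s < N"
  shows "(\<Sum>z\<in>Z. (V * B z * adj V) $$ (r,s))
    = (V * mat N N (\<lambda>(a,b). \<Sum>z\<in>Z. B z $$ (a,b)) * adj V) $$ (r,s)"
proof -
  have "(\<Sum>z\<in>Z. (V * B z * adj V) $$ (r,s))
      = (\<Sum>z\<in>Z. \<Sum>a<N. \<Sum>b<N. V $$ (r,a) * B z $$ (a,b) * cnj (V $$ (s,b)))"
    using assms by (intro sum.cong) (simp_all add: index_mult3_mat_sum[OF V B adj_carrier[OF V]]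
        del: index_mult_mat(1))
  also have "\<dots> = (\<Sum>a<N. \<Sum>b<N. V $$ (r,a) * (\<Sum>z\<in>Z. B z $$ (a,b)) * cnj (V $$ (s,b)))"
    by (simp add: sum_distrib_left sum_distrib_right sum.swap[of _ Z])
  also have "\<dots> = (V * mat N N (\<lambda>(a,b). \<Sum>z\<in>Z. B z $$ (a,b)) * adj V) $$ (r,s)"
    using assms by (simp add: index_mult3_mat_sum[OF V _ adj_carrier[OF V]] del: index_mult_mat(1))
  finally show ?thesis .
qed

lemma unitary_q_carrier: "unitary_q n V \<Longrightarrow> V \<in> carrier_mat (dimq n) (dimq n)"
  by (simp add: unitary_q_def)

lemma unitary_q_rows_orthonormal:
  assumes "unitary_q n V" "r < dimq n" "s < dimq n"
  shows "(\<Sum>a<dimq n. V $$ (r,a) * cnj (V $$ (s,a))) = (if r = s then 1 else 0)"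
proof -
  have V: "V \<in> carrier_mat (dimq n) (dimq n)" using assms(1) by (rule unitary_q_carrier)
  have "(\<Sum>a<dimq n. V $$ (r,a) * cnj (V $$ (s,a))) = (V * adj V) $$ (r,s)"
    using assms V by (simp add: index_mult_mat_sum[OF V adj_carrier[OF V]] del: index_mult_mat(1))
  also have "\<dots> = (if r = s then 1 else 0)"
    using assms by (simp add: unitary_q_def)
  finally show ?thesis .
qed

lemma trace_q_mult_comm:
  assumes "A \<in> carrier_mat m k" "B \<in> carrier_mat k m"
  shows "trace_q (A * B) = trace_q (B * A)"
proof -
  have "trace_q (A * B) = (\<Sum>i<m. \<Sum>a<k. A $$ (i,a) * B $$ (a,i))"
    using assms by (simp add: trace_q_def index_mult_mat_sum[OF assms] del: index_mult_mat(1))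
  also have "\<dots> = (\<Sum>a<k. \<Sum>i<m. B $$ (a,i) * A $$ (i,a))"
    by (simp add: sum.swap[of _ "{..<m}"] mult.commute)
  also have "\<dots> = trace_q (B * A)"
    using assms by (simp add: trace_q_def index_mult_mat_sum[OF assms(2,1)] del: index_mult_mat(1))
  finally show ?thesis .
qed

lemma trace_q_unitary_conj:
  assumes V: "unitary_q n V" and rho: "\<rho> \<in> carrier_mat (dimq n) (dimq n)"
  shows "trace_q (adj V * \<rho> * V) = trace_q \<rho>"
proof -
  have V': "V \<in> carrier_mat (dimq n) (dimq n)" using unitary_q_carrier[OF V] .
  have "trace_q (adj V * \<rho> * V) = trace_q (V * (adj V * \<rho>))"
    using V' rho by (intro trace_q_mult_comm) auto
  also have "\<dots> = trace_q ((V * adj V) * \<rho>)"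
    using V' rho by (simp add: assoc_mult_mat[of V "dimq n" "dimq n" "adj V" "dimq n" \<rho>])
  finally show ?thesis using V rho by (simp add: unitary_q_def)
qed

lemma mixture_inversion_mat:
  fixes f :: "'a :: field"
  assumes "f \<noteq> 0" "A \<in> carrier_mat m k" "E \<in> carrier_mat m k"
  shows "A = (1 / f) \<cdot>\<^sub>m (f \<cdot>\<^sub>m A + (1 - f) \<cdot>\<^sub>m E) - (1 / f - 1) \<cdot>\<^sub>m E"
  by (rule eq_matI) (use assms in \<open>auto simp: field_simps\<close>)

section \<open>Pauli operators\<close>

lemma bit_index_less: "(a::nat) < 2 ^ n \<Longrightarrow> bit a i \<Longrightarrow> i < n"
  by (metis bit_take_bit_iff take_bit_nat_eq_self_iff)

lemma eq_if_low_bits_eq: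
  "(a::nat) < 2 ^ n \<Longrightarrow> b < 2 ^ n \<Longrightarrow> (\<forall>i<n. bit a i = bit b i) \<Longrightarrow> a = b"
  by (metis bit_eq_iff bit_index_less)

lemma xor_less_pow2: "(a::nat) < 2 ^ n \<Longrightarrow> b < 2 ^ n \<Longrightarrow> xor a b < 2 ^ n"
  by (metis take_bit_nat_eq_self_iff take_bit_xor)

lemma eq_xor_iff: "((r::nat) = xor a x) \<longleftrightarrow> (a = xor r x)"
  by (metis xor.assoc xor_self_eq xor.right_neutral)

lemma bij_betw_xor: "(a::nat) < 2 ^ n \<Longrightarrow> bij_betw (\<lambda>x. xor x a) {..<2 ^ n} {..<2 ^ n}"
  by (rule bij_betw_byWitness[where f' = "\<lambda>x. xor x a"]) (auto simp: xor.assoc xor_less_pow2)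

definition pauli_sign :: "nat \<Rightarrow> nat \<Rightarrow> nat \<Rightarrow> complex" where
  "pauli_sign n z c = (-1) ^ card {i. i < n \<and> bit z i \<and> bit c i}"

lemma pauli_entry:
  assumes "x < dimq n" "r < dimq n" "c < dimq n"
  shows "pauli n (x,z) $$ (r,c) = (if r = xor c x then pauli_sign n z c else 0)"
proof -
  have "(\<forall>i<n. bit r i = (bit c i \<noteq> bit x i)) \<longleftrightarrow> r = xor c x"
    using eq_if_low_bits_eq[OF assms(2) xor_less_pow2[OF assms(3,1)]] by (auto simp: bit_xor_iff)
  then show ?thesis using assms by (simp add: pauli_def pauli_sign_def)
qed

lemma pauli_carrier [simp]: "pauli n P \<in> carrier_mat (dimq n) (dimq n)"
  by (simp add: pauli_def split: prod.splits)

lemma pauli_dims [simp]: "dim_row (pauli n P) = dimq n" "dim_col (pauli n P) = dimq n"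
  by (simp_all add: pauli_def split: prod.splits)

lemma pauli_zero: "pauli n (0,0) = 1\<^sub>m (dimq n)"
  by (rule eq_matI) (auto simp: pauli_entry pauli_sign_def)

lemma pauli_sign_sq: "pauli_sign n z c * pauli_sign n z c = 1"
  by (simp add: pauli_sign_def power_mult_distrib[symmetric])

lemma cnj_pauli_sign [simp]: "cnj (pauli_sign n z c) = pauli_sign n z c"
  by (simp add: pauli_sign_def)

lemma pauli_sign_pow2: "i < n \<Longrightarrow> pauli_sign n z (2 ^ i) = (if bit z i then -1 else 1)"
proof -
  assume "i < n"
  then have "{k. k < n \<and> bit z k \<and> bit ((2::nat) ^ i) k} = (if bit z i then {i} else {})"
    by (auto simp: bit_exp_iff)
  then show ?thesis by (simp add: pauli_sign_def)
qed

lemma pauli_sign_xor_pow2: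
  assumes "i < n"
  shows "pauli_sign n (xor z (2 ^ i)) c = (if bit c i then -1 else 1) * pauli_sign n z c"
proof -
  let ?A = "{k. k < n \<and> bit z k \<and> bit c k}"
  let ?B = "{k. k < n \<and> bit (xor z (2 ^ i)) k \<and> bit c k}"
  consider "\<not> bit c i" | "bit c i" "bit z i" | "bit c i" "\<not> bit z i" by blast
  then show ?thesis
  proof cases
    case 1
    then have "?B = ?A" by (auto simp: bit_xor_iff bit_exp_iff)
    then show ?thesis using 1 by (simp add: pauli_sign_def)
  next
    case 2
    then have "?B = ?A - {i}" "i \<in> ?A" using assms by (auto simp: bit_xor_iff bit_exp_iff)
    then have "card ?A = Suc (card ?B)" using card_Suc_Diff1[of ?A i] by simp
    then show ?thesis using 2 by (simp add: pauli_sign_def)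
  next
    case 3
    then have "?B = insert i ?A" "i \<notin> ?A" using assms by (auto simp: bit_xor_iff bit_exp_iff)
    then show ?thesis using 3 by (simp add: pauli_sign_def)
  qed
qed

lemma sum_pauli_sign_mult:
  assumes c: "c < dimq n" and d: "d < dimq n"
  shows "(\<Sum>z<dimq n. pauli_sign n z c * pauli_sign n z d) = (if c = d then of_nat (dimq n) else 0)"
proof (cases "c = d")
  case True
  then show ?thesis by (simp add: pauli_sign_sq)
next
  case False
  then obtain i where i: "i < n" "bit c i \<noteq> bit d i"
    using eq_if_low_bits_eq[OF c d] by blast
  let ?f = "\<lambda>z. pauli_sign n z c * pauli_sign n z d"
  have "(\<Sum>z<dimq n. ?f z) = (\<Sum>z<dimq n. ?f (xor z (2 ^ i)))"
    using i by (intro sum.reindex_bij_betw[symmetric] bij_betw_xor) simp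
  also have "\<dots> = - (\<Sum>z<dimq n. ?f z)"
    using i by (simp add: pauli_sign_xor_pow2 sum_negf[symmetric])
  finally show ?thesis using False by simp
qed

lemma pauli_conj_entry:
  assumes rho: "\<rho> \<in> carrier_mat (dimq n) (dimq n)" and x: "x < dimq n"
    and r: "r < dimq n" and s: "s < dimq n"
  shows "(pauli n (x,z) * \<rho> * adj (pauli n (x,z))) $$ (r,s)
     = pauli_sign n z (xor r x) * \<rho> $$ (xor r x, xor s x) * pauli_sign n z (xor s x)"
proof -
  let ?r = "xor r x" and ?s = "xor s x" and ?\<sigma> = "pauli_sign n z"
  have "(pauli n (x,z) * \<rho> * adj (pauli n (x,z))) $$ (r,s)
    = (\<Sum>a<dimq n. \<Sum>b<dimq n. (if a = ?r then ?\<sigma> a else 0) * \<rho> $$ (a,b)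
         * (if b = ?s then ?\<sigma> b else 0))"
    using assms by (simp add: index_mult3_mat_sum[OF pauli_carrier rho adj_carrier[OF pauli_carrier]]
        pauli_entry eq_xor_iff if_distrib[of cnj] del: index_mult_mat(1) cong: if_cong)
  also have "\<dots> = (\<Sum>a<dimq n. \<Sum>b<dimq n. if b = ?s then (if a = ?r then ?\<sigma> a * \<rho> $$ (a,b) * ?\<sigma> b else 0) else 0)"
    by (intro sum.cong refl) simp
  also have "\<dots> = ?\<sigma> ?r * \<rho> $$ (?r, ?s) * ?\<sigma> ?s"
    using xor_less_pow2[OF r x] xor_less_pow2[OF s x] by simp
  finally show ?thesis .
qed

lemma sum_pauli_conj_z_entry:
  assumes rho: "\<rho> \<in> carrier_mat (dimq n) (dimq n)" and x: "x < dimq n"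
    and r: "r < dimq n" and s: "s < dimq n"
  shows "(\<Sum>z<dimq n. (pauli n (x,z) * \<rho> * adj (pauli n (x,z))) $$ (r,s))
     = (if r = s then of_nat (dimq n) * \<rho> $$ (xor r x, xor r x) else 0)"
proof -
  have "(\<Sum>z<dimq n. (pauli n (x,z) * \<rho> * adj (pauli n (x,z))) $$ (r,s))
     = \<rho> $$ (xor r x, xor s x) * (\<Sum>z<dimq n. pauli_sign n z (xor r x) * pauli_sign n z (xor s x))"
    using assms by (simp add: pauli_conj_entry sum_distrib_left mult_ac del: index_mult_mat(1))
  also have "\<dots> = (if r = s then of_nat (dimq n) * \<rho> $$ (xor r x, xor r x) else 0)"
    using xor_less_pow2[OF r x] xor_less_pow2[OF s x]
    by (simp add: sum_pauli_sign_mult eq_xor_iff[symmetric] xor.assoc)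
  finally show ?thesis .
qed

lemma sum_pauli_conj_entry:
  assumes rho: "\<rho> \<in> carrier_mat (dimq n) (dimq n)" and r: "r < dimq n" and s: "s < dimq n"
  shows "(\<Sum>P\<in>{..<dimq n} \<times> {..<dimq n}. (pauli n P * \<rho> * adj (pauli n P)) $$ (r,s))
     = (if r = s then of_nat (dimq n) * trace_q \<rho> else 0)"
proof -
  have "(\<Sum>x<dimq n. \<rho> $$ (xor r x, xor r x)) = (\<Sum>k<dimq n. \<rho> $$ (k, k))"
    using sum.reindex_bij_betw[OF bij_betw_xor[OF r], of "\<lambda>k. \<rho> $$ (k, k)"] by (simp add: xor.commute)
  moreover have "(\<Sum>P\<in>{..<dimq n} \<times> {..<dimq n}. (pauli n P * \<rho> * adj (pauli n P)) $$ (r,s))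
    = (\<Sum>x<dimq n. \<Sum>z<dimq n. (pauli n (x,z) * \<rho> * adj (pauli n (x,z))) $$ (r,s))"
    by (simp add: sum.cartesian_product)
  ultimately show ?thesis
    using assms by (cases "r = s") (simp_all add: sum_pauli_conj_z_entry trace_q_def
        sum_distrib_left[symmetric] del: index_mult_mat(1))
qed

lemma Qstar_eq: "Qstar n = {..<dimq n} \<times> {..<dimq n} - {(0,0)}"
  by (auto simp: Qstar_def)

lemma sum_Qstar_pauli_conj_entry:
  assumes rho: "\<rho> \<in> carrier_mat (dimq n) (dimq n)" and r: "r < dimq n" and s: "s < dimq n"
  shows "(\<Sum>P\<in>Qstar n. (pauli n P * \<rho> * adj (pauli n P)) $$ (r,s))
     = (if r = s then of_nat (dimq n) * trace_q \<rho> else 0) - \<rho> $$ (r,s)"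
proof -
  have "(pauli n (0,0) * \<rho> * adj (pauli n (0,0))) $$ (r,s) = \<rho> $$ (r,s)"
    using assms by (simp add: pauli_zero adj_one)
  then show ?thesis
    using sum_pauli_conj_entry[OF assms] by (simp add: Qstar_eq sum_diff1)
qed

lemma pauli_phase_inj:
  assumes P: "P \<in> {..<dimq n} \<times> {..<dimq n}" and Q: "Q \<in> {..<dimq n} \<times> {..<dimq n}"
    and c: "cmod c = 1" and eq: "c \<cdot>\<^sub>m pauli n P = c' \<cdot>\<^sub>m pauli n Q"
  shows "P = Q"
proof -
  \<comment> \<open>Column 0 determines x and the phase; the columns 2^i then determine the bits of z.\<close>
  obtain x z x' z' where PQ: "P = (x,z)" "Q = (x',z')" by fastforce
  have x: "x < dimq n" "x' < dimq n" and z: "z < dimq n" "z' < dimq n" using P Q PQ by auto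
  have ent: "c * pauli n (x,z) $$ (r,d) = c' * pauli n (x',z') $$ (r,d)"
    if "r < dimq n" "d < dimq n" for r d
    using arg_cong[OF eq, of "\<lambda>A. A $$ (r,d)"] that PQ by simp
  have c0: "c \<noteq> 0" using c by auto
  have "c = c' * (if x = x' then 1 else 0)"
    using ent[OF x(1), of 0] x by (simp add: pauli_entry pauli_sign_def)
  then have xx: "x = x'" and cc: "c = c'" using c0 by (auto split: if_splits)
  have "bit z i = bit z' i" if i: "i < n" for i
  proof -
    have p: "(2::nat) ^ i < 2 ^ n" using i by simp
    have "c * pauli_sign n z (2 ^ i) = c * pauli_sign n z' (2 ^ i)"
      using ent[OF xor_less_pow2[OF p x(1)] p] xor_less_pow2[OF p x(1)] xx cc p x
      by (simp add: pauli_entry)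
    then show ?thesis using i c0 by (simp add: pauli_sign_pow2 split: if_splits)
  qed
  then show ?thesis using PQ xx eq_if_low_bits_eq[OF z] by blast
qed

section \<open>The measure-and-prepare channel\<close>

lemma index_ketbra:
  "i < dimq n \<Longrightarrow> j < dimq n \<Longrightarrow> ketbra n k l $$ (i,j) = (if i = k \<and> j = l then 1 else 0)"
  by (simp add: ketbra_def)

lemma trace_q_ketbra_mult:
  assumes k: "k < dimq n" and \<sigma>: "\<sigma> \<in> carrier_mat (dimq n) (dimq n)"
  shows "trace_q (ketbra n k k * \<sigma>) = \<sigma> $$ (k,k)"
proof -
  have K: "ketbra n k k \<in> carrier_mat (dimq n) (dimq n)" by (simp add: ketbra_def)
  have "trace_q (ketbra n k k * \<sigma>) = (\<Sum>i<dimq n. if i = k then \<sigma> $$ (k,i) else 0)"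
    unfolding trace_q_def using K \<sigma> k
    by (intro sum.cong) (auto simp: index_mult_mat_sum[OF K \<sigma>] index_ketbra if_distrib[where f = "\<lambda>u. u * c" for c]
        simp del: index_mult_mat(1) cong: if_cong)
  then show ?thesis using k by simp
qed

lemma meas_M_entry:
  assumes \<sigma>: "\<sigma> \<in> carrier_mat (dimq n) (dimq n)" and r: "r < dimq n" and t: "t < dimq n"
  shows "meas_M n \<sigma> $$ (r,t)
    = (if r = t then (trace_q \<sigma> - \<sigma> $$ (r,r)) / (of_nat (dimq n) - 1) else 0)"
proof -
  let ?c = "1 / (of_nat (dimq n) - 1 :: complex)"
  have "meas_M n \<sigma> $$ (r,t) = (\<Sum>k<dimq n. \<sigma> $$ (k,k) * rho_k n k $$ (r,t))"
    using assms by (simp add: meas_M_def trace_q_ketbra_mult)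
  also have "\<dots> = (if r = t then (\<Sum>k<dimq n. \<sigma> $$ (k,k) * ?c - (if k = r then \<sigma> $$ (k,k) * ?c else 0)) else 0)"
    using r t by (auto simp: rho_k_def intro: sum.cong)
  also have "\<dots> = (if r = t then (trace_q \<sigma> - \<sigma> $$ (r,r)) / (of_nat (dimq n) - 1) else 0)"
    using \<sigma> r by (simp add: sum_subtractf trace_q_def sum_divide_distrib[symmetric] diff_divide_distrib)
  finally show ?thesis .
qed

lemma unitary_conj_meas_M_entry:
  assumes V: "unitary_q n V" and rho: "\<rho> \<in> carrier_mat (dimq n) (dimq n)"
    and r: "r < dimq n" and s: "s < dimq n"
  shows "(V * meas_M n (adj V * \<rho> * V) * adj V) $$ (r,s)
    = ((if r = s then trace_q \<rho> else 0)
       - (\<Sum>a<dimq n. V $$ (r,a) * (adj V * \<rho> * V) $$ (a,a) * cnj (V $$ (s,a))))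
      / (of_nat (dimq n) - 1)"
proof -
  let ?\<sigma> = "adj V * \<rho> * V" and ?d = "of_nat (dimq n) - 1 :: complex"
  have V': "V \<in> carrier_mat (dimq n) (dimq n)" using V by (rule unitary_q_carrier)
  have \<sigma>: "?\<sigma> \<in> carrier_mat (dimq n) (dimq n)" using V' rho by simp
  have M: "meas_M n ?\<sigma> \<in> carrier_mat (dimq n) (dimq n)" by (simp add: meas_M_def)
  have "(V * meas_M n ?\<sigma> * adj V) $$ (r,s)
      = (\<Sum>a<dimq n. trace_q ?\<sigma> / ?d * (V $$ (r,a) * cnj (V $$ (s,a)))
          - V $$ (r,a) * ?\<sigma> $$ (a,a) * cnj (V $$ (s,a)) / ?d)"
    using r s by (simp add: conj_diagonal_entry[OF V' M] meas_M_entry[OF \<sigma>] algebra_simps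
        diff_divide_distrib)
  then show ?thesis
    using unitary_q_rows_orthonormal[OF V r s] trace_q_unitary_conj[OF V rho]
    by (simp add: sum_subtractf sum_distrib_left[symmetric] sum_divide_distrib[symmetric]
        diff_divide_distrib)
qed

lemma sum_Zop_conj_entry:
  assumes V: "V \<in> carrier_mat (dimq n) (dimq n)" and rho: "\<rho> \<in> carrier_mat (dimq n) (dimq n)"
    and r: "r < dimq n" and s: "s < dimq n"
  shows "(\<Sum>a<dimq n. (V * Zop n a * adj V * \<rho> * adj (V * Zop n a * adj V)) $$ (r,s))
    = of_nat (dimq n) * (\<Sum>a<dimq n. V $$ (r,a) * (adj V * \<rho> * V) $$ (a,a) * cnj (V $$ (s,a)))"
proof -
  let ?\<sigma> = "adj V * \<rho> * V"
  let ?\<Delta> = "mat (dimq n) (dimq n) (\<lambda>(a,b). \<Sum>z<dimq n. (Zop n z * ?\<sigma> * adj (Zop n z)) $$ (a,b))"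
  have \<sigma>: "?\<sigma> \<in> carrier_mat (dimq n) (dimq n)" using V rho by simp
  \<comment> \<open>Averaging over the Z_a dephases: only the diagonal of adj V * rho * V survives.\<close>
  have \<Delta>: "?\<Delta> $$ (a,b) = (if a = b then of_nat (dimq n) * ?\<sigma> $$ (a,a) else 0)"
    if "a < dimq n" "b < dimq n" for a b
    using sum_pauli_conj_z_entry[OF \<sigma> _ that, of 0] that by simp
  have "(\<Sum>a<dimq n. (V * Zop n a * adj V * \<rho> * adj (V * Zop n a * adj V)) $$ (r,s))
      = (V * ?\<Delta> * adj V) $$ (r,s)"
    using V rho r s by (simp add: conj_conj_mat[OF V pauli_carrier rho] sum_conj_entry[OF V]
        del: index_mult_mat(1))
  also have "\<dots> = (\<Sum>a<dimq n. V $$ (r,a) * ?\<Delta> $$ (a,a) * cnj (V $$ (s,a)))"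
  proof (rule conj_diagonal_entry[OF V _ _ r s])
    show "?\<Delta> \<in> carrier_mat (dimq n) (dimq n)" by simp
    show "?\<Delta> $$ (a,b) = 0" if "a < dimq n" "b < dimq n" "a \<noteq> b" for a b
      using \<Delta>[OF that(1,2)] by (simp only: that(3) if_False)
  qed
  also have "\<dots> = (\<Sum>a<dimq n. of_nat (dimq n) * (V $$ (r,a) * ?\<sigma> $$ (a,a) * cnj (V $$ (s,a))))"
  proof (rule sum.cong[OF refl])
    fix a assume "a \<in> {..<dimq n}"
    then show "V $$ (r,a) * ?\<Delta> $$ (a,a) * cnj (V $$ (s,a))
        = of_nat (dimq n) * (V $$ (r,a) * ?\<sigma> $$ (a,a) * cnj (V $$ (s,a)))"
      using \<Delta>[of a a] by (simp only: lessThan_iff if_True) (simp add: algebra_simps)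
  qed
  finally show ?thesis
    by (simp only: sum_distrib_left)
qed

section \<open>Twirling over the commuting classes\<close>

lemma pauli_class_reindex:
  assumes T_card: "card T = dimq n - 1"
    and T_eq: "T = {P \<in> Qstar n. \<exists>a. 0 < a \<and> a < dimq n \<and>
                 (\<exists>c. cmod c = 1 \<and> W a = c \<cdot>\<^sub>m pauli n P)}"
    and W_pauli: "\<forall>a. 0 < a \<and> a < dimq n \<longrightarrow>
                 (\<exists>P\<in>T. \<exists>c. cmod c = 1 \<and> W a = c \<cdot>\<^sub>m pauli n P)"
  obtains f where "bij_betw f {1..<dimq n} T"
    and "\<forall>a\<in>{1..<dimq n}. \<exists>c. cmod c = 1 \<and> W a = c \<cdot>\<^sub>m pauli n (f a)"
proof -
  have "\<forall>a\<in>{1..<dimq n}. \<exists>P. P \<in> T \<and> (\<exists>c. cmod c = 1 \<and> W a = c \<cdot>\<^sub>m pauli n P)"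
  proof
    fix a assume "a \<in> {1..<dimq n}"
    then have "0 < a \<and> a < dimq n" by auto
    then show "\<exists>P. P \<in> T \<and> (\<exists>c. cmod c = 1 \<and> W a = c \<cdot>\<^sub>m pauli n P)"
      using W_pauli by blast
  qed
  from bchoice[OF this] obtain f
    where f: "\<forall>a\<in>{1..<dimq n}. f a \<in> T \<and> (\<exists>c. cmod c = 1 \<and> W a = c \<cdot>\<^sub>m pauli n (f a))"
    by blast
  have T_sub: "T \<subseteq> {..<dimq n} \<times> {..<dimq n}" using T_eq by (auto simp: Qstar_def)
  have img: "f ` {1..<dimq n} = T"
  proof
    show "f ` {1..<dimq n} \<subseteq> T" using f by auto
    show "T \<subseteq> f ` {1..<dimq n}"
    proof
      fix P assume P: "P \<in> T"
      then obtain a c where "0 < a" "a < dimq n" and c: "cmod c = 1" "W a = c \<cdot>\<^sub>m pauli n P"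
        using T_eq by blast
      then have a: "a \<in> {1..<dimq n}" by simp
      obtain c' where "W a = c' \<cdot>\<^sub>m pauli n (f a)" using f a by blast
      then have "c \<cdot>\<^sub>m pauli n P = c' \<cdot>\<^sub>m pauli n (f a)" using c(2) by simp
      then have "P = f a"
        using pauli_phase_inj[OF _ _ c(1)] P f a T_sub by blast
      then show "P \<in> f ` {1..<dimq n}" using a by blast
    qed
  qed
  have "inj_on f {1..<dimq n}"
    by (rule eq_card_imp_inj_on) (simp_all only: img T_card card_atLeastLessThan finite_atLeastLessThan)
  then show ?thesis
    using that img f unfolding bij_betw_def by blast
qed

lemma sum_pauli_class_conj_entry:
  assumes rho: "\<rho> \<in> carrier_mat (dimq n) (dimq n)"
    and T_card: "card T = dimq n - 1"
    and T_eq: "T = {P \<in> Qstar n. \<exists>a. 0 < a \<and> a < dimq n \<and>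
                 (\<exists>c. cmod c = 1 \<and> W a = c \<cdot>\<^sub>m pauli n P)}"
    and W_pauli: "\<forall>a. 0 < a \<and> a < dimq n \<longrightarrow>
                 (\<exists>P\<in>T. \<exists>c. cmod c = 1 \<and> W a = c \<cdot>\<^sub>m pauli n P)"
  shows "(\<Sum>a\<in>{1..<dimq n}. (W a * \<rho> * adj (W a)) $$ (r,s))
       = (\<Sum>P\<in>T. (pauli n P * \<rho> * adj (pauli n P)) $$ (r,s))"
proof -
  obtain f where f: "bij_betw f {1..<dimq n} T"
    and W: "\<forall>a\<in>{1..<dimq n}. \<exists>c. cmod c = 1 \<and> W a = c \<cdot>\<^sub>m pauli n (f a)"
    by (rule pauli_class_reindex[OF T_card T_eq W_pauli])
  have phase: "(W a * \<rho> * adj (W a)) $$ (r,s) = (pauli n (f a) * \<rho> * adj (pauli n (f a))) $$ (r,s)"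
    if "a \<in> {1..<dimq n}" for a
  proof -
    from W that obtain c where "cmod c = 1" "W a = c \<cdot>\<^sub>m pauli n (f a)" by (auto dest: bspec)
    then show ?thesis using phase_conj[OF pauli_carrier rho] by simp
  qed
  have "(\<Sum>a\<in>{1..<dimq n}. (W a * \<rho> * adj (W a)) $$ (r,s))
      = (\<Sum>a\<in>{1..<dimq n}. (pauli n (f a) * \<rho> * adj (pauli n (f a))) $$ (r,s))"
    by (rule sum.cong[OF refl phase])
  also have "\<dots> = (\<Sum>P\<in>T. (pauli n P * \<rho> * adj (pauli n P)) $$ (r,s))"
    by (rule sum.reindex_bij_betw[OF f, of "\<lambda>P. (pauli n P * \<rho> * adj (pauli n P)) $$ (r,s)"])
  finally show ?thesis .
qed

lemma conj_meas_M_pauli_class_entry: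
  assumes V: "unitary_q n V" and rho: "\<rho> \<in> carrier_mat (dimq n) (dimq n)"
    and r: "r < dimq n" and s: "s < dimq n"
    and T_card: "card T = dimq n - 1"
    and T_eq: "T = {P \<in> Qstar n. \<exists>a. 0 < a \<and> a < dimq n \<and>
                 (\<exists>c. cmod c = 1 \<and> V * Zop n a * adj V = c \<cdot>\<^sub>m pauli n P)}"
    and V_Z: "\<forall>a. 0 < a \<and> a < dimq n \<longrightarrow>
                 (\<exists>P\<in>T. \<exists>c. cmod c = 1 \<and> V * Zop n a * adj V = c \<cdot>\<^sub>m pauli n P)"
  shows "(V * meas_M n (adj V * \<rho> * V) * adj V) $$ (r,s)
    = ((if r = s then trace_q \<rho> else 0)
       - (\<rho> $$ (r,s) + (\<Sum>P\<in>T. (pauli n P * \<rho> * adj (pauli n P)) $$ (r,s))) / of_nat (dimq n))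
      / (of_nat (dimq n) - 1)"
proof -
  let ?W = "\<lambda>a. V * Zop n a * adj V"
  define D where "D = (\<Sum>a<dimq n. V $$ (r,a) * (adj V * \<rho> * V) $$ (a,a) * cnj (V $$ (s,a)))"
  define X where "X = (\<Sum>P\<in>T. (pauli n P * \<rho> * adj (pauli n P)) $$ (r,s))"
  have W0: "?W 0 = 1\<^sub>m (dimq n)"
    using V by (simp add: pauli_zero right_mult_one_mat[OF unitary_q_carrier[OF V]] unitary_q_def)
  have "of_nat (dimq n) * D = (\<Sum>a<dimq n. (?W a * \<rho> * adj (?W a)) $$ (r,s))"
    unfolding D_def by (rule sum_Zop_conj_entry[OF unitary_q_carrier[OF V] rho r s, symmetric])
  also have "\<dots> = (?W 0 * \<rho> * adj (?W 0)) $$ (r,s) + (\<Sum>a\<in>{1..<dimq n}. (?W a * \<rho> * adj (?W a)) $$ (r,s))"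
    by (simp only: lessThan_atLeast0 sum.atLeast_Suc_lessThan[OF zero_less_power] zero_less_numeral
        One_nat_def)
  also have "(?W 0 * \<rho> * adj (?W 0)) $$ (r,s) = \<rho> $$ (r,s)"
    using rho by (simp add: W0 adj_one del: index_mult_mat(1))
  also have "(\<Sum>a\<in>{1..<dimq n}. (?W a * \<rho> * adj (?W a)) $$ (r,s)) = X"
    unfolding X_def by (rule sum_pauli_class_conj_entry[OF rho T_card T_eq V_Z])
  finally have "D = (\<rho> $$ (r,s) + X) / of_nat (dimq n)"
    by (simp add: eq_divide_eq mult.commute del: of_nat_power)
  then show ?thesis
    unfolding unitary_conj_meas_M_entry[OF V rho r s] D_def[symmetric] X_def[symmetric] by simp
qed

lemma class_average_identity:
  fixes N t x T :: complex and X :: "nat \<Rightarrow> complex"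
  assumes N: "N \<noteq> 0" "N - 1 \<noteq> 0" "N + 1 \<noteq> 0" and m: "of_nat m = N"
    and X: "(\<Sum>j\<le>m. X j) = T" and T: "T = N * t - x"
  shows "1 / (N + 1) * (\<Sum>j\<le>m. (t - (x + X j) / N) / (N - 1)) = T / (N * N - 1)"
proof -
  have "N * N - 1 = (N + 1) * (N - 1)" by (simp add: algebra_simps)
  then have NN: "N * N - 1 \<noteq> 0" using N by simp
  have "(t - (x + X j) / N) / (N - 1) = (t - x / N) / (N - 1) - X j / N / (N - 1)" for j
    by (simp add: add_divide_distrib diff_divide_distrib)
  then have "(\<Sum>j\<le>m. (t - (x + X j) / N) / (N - 1))
      = (N + 1) * ((t - x / N) / (N - 1)) - T / N / (N - 1)"
    using m by (simp add: sum_subtractf sum_divide_distrib[symmetric] X)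
  also have "\<dots> = (N + 1) * (T / (N * N - 1))"
    using N NN by (simp add: T divide_simps) (simp add: algebra_simps)
  finally show ?thesis
    using N by simp
qed

lemma twirl_V_dims [simp]:
  "dim_row (twirl_V n V M \<rho>) = dimq n" "dim_col (twirl_V n V M \<rho>) = dimq n"
  by (simp_all add: twirl_V_def)

lemma twirl_V_meas_M_entry:
  fixes S :: "nat \<Rightarrow> (nat \<times> nat) set"
  assumes n: "n \<ge> 1"
    and S_disj: "\<forall>j\<le>dimq n. \<forall>j'\<le>dimq n. j \<noteq> j' \<longrightarrow> S j \<inter> S j' = {}"
    and S_cover: "(\<Union>j\<le>dimq n. S j) = Qstar n"
    and S_card: "\<forall>j\<le>dimq n. card (S j) = dimq n - 1"
    and V_unit: "\<forall>j\<le>dimq n. unitary_q n (V j)"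
    and V_S: "\<forall>j\<le>dimq n. S j = {P \<in> Qstar n. \<exists>a. 0 < a \<and> a < dimq n \<and>
                 (\<exists>c. cmod c = 1 \<and> V j * Zop n a * adj (V j) = c \<cdot>\<^sub>m pauli n P)}"
    and V_Z: "\<forall>j\<le>dimq n. \<forall>a. 0 < a \<and> a < dimq n \<longrightarrow>
                 (\<exists>P\<in>S j. \<exists>c. cmod c = 1 \<and> V j * Zop n a * adj (V j) = c \<cdot>\<^sub>m pauli n P)"
    and rho: "\<rho> \<in> carrier_mat (dimq n) (dimq n)" and r: "r < dimq n" and s: "s < dimq n"
  shows "twirl_V n V (meas_M n) \<rho> $$ (r,s)
    = (\<Sum>P\<in>Qstar n. (pauli n P * \<rho> * adj (pauli n P)) $$ (r,s)) / (of_nat (2 ^ (2 * n)) - 1)"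
proof -
  define N :: complex where "N = of_nat (dimq n)"
  define t where "t = (if r = s then trace_q \<rho> else 0)"
  define T where "T = (\<Sum>P\<in>Qstar n. (pauli n P * \<rho> * adj (pauli n P)) $$ (r,s))"
  define X where "X j = (\<Sum>P\<in>S j. (pauli n P * \<rho> * adj (pauli n P)) $$ (r,s))" for j
  have ge2: "(2::nat) \<le> dimq n" using n by (simp add: self_le_power)
  have "N - 1 = of_nat (dimq n - 1)" using ge2 by (simp add: N_def of_nat_diff)
  moreover have "N + 1 = of_nat (dimq n + 1)" by (simp add: N_def)
  ultimately have N: "N \<noteq> 0" "N - 1 \<noteq> 0" "N + 1 \<noteq> 0"
    using ge2 unfolding N_def by (simp_all only: of_nat_eq_0_iff)
  have T: "T = N * t - \<rho> $$ (r,s)"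
    unfolding T_def N_def t_def using sum_Qstar_pauli_conj_entry[OF rho r s]
    by (simp del: index_mult_mat(1))
  have X: "(\<Sum>j\<le>dimq n. X j) = T"
  proof -
    have "finite (S j)" if "j \<le> dimq n" for j
    proof (rule finite_subset)
      show "S j \<subseteq> Qstar n" using V_S that by blast
    qed (simp add: Qstar_eq)
    then show ?thesis
      unfolding X_def T_def S_cover[symmetric] using S_disj by (subst sum.UNION_disjoint) auto
  qed
  have VMV: "(V j * meas_M n (adj (V j) * \<rho> * V j) * adj (V j)) $$ (r,s)
      = (t - (\<rho> $$ (r,s) + X j) / N) / (N - 1)" if j: "j \<le> dimq n" for j
    unfolding t_def X_def N_def
    by (rule conj_meas_M_pauli_class_entry[OF _ rho r s]) (use V_unit S_card V_S V_Z j in blast)+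
  have NN': "of_nat (2 ^ (2 * n)) = N * N"
    unfolding N_def by (simp add: mult_2 power_add)
  have "twirl_V n V (meas_M n) \<rho> $$ (r,s)
      = 1 / (N + 1) * (\<Sum>j\<le>dimq n. (V j * meas_M n (adj (V j) * \<rho> * V j) * adj (V j)) $$ (r,s))"
    using r s by (simp add: twirl_V_def N_def del: index_mult_mat(1))
  also have "\<dots> = 1 / (N + 1) * (\<Sum>j\<le>dimq n. (t - (\<rho> $$ (r,s) + X j) / N) / (N - 1))"
    by (rule arg_cong[where f = "\<lambda>z. 1 / (N + 1) * z"], rule sum.cong[OF refl], rule VMV) simp
  also have "\<dots> = T / (N * N - 1)"
    by (rule class_average_identity[OF N _ X T]) (simp add: N_def)
  finally show ?thesis
    unfolding NN' T_def .
qed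

lemma depol_eq_mixture_twirl_V_meas_M:
  fixes S :: "nat \<Rightarrow> (nat \<times> nat) set"
  assumes n: "n \<ge> 1"
    and S_disj: "\<forall>j\<le>dimq n. \<forall>j'\<le>dimq n. j \<noteq> j' \<longrightarrow> S j \<inter> S j' = {}"
    and S_cover: "(\<Union>j\<le>dimq n. S j) = Qstar n"
    and S_card: "\<forall>j\<le>dimq n. card (S j) = dimq n - 1"
    and V_unit: "\<forall>j\<le>dimq n. unitary_q n (V j)"
    and V_S: "\<forall>j\<le>dimq n. S j = {P \<in> Qstar n. \<exists>a. 0 < a \<and> a < dimq n \<and>
                 (\<exists>c. cmod c = 1 \<and> V j * Zop n a * adj (V j) = c \<cdot>\<^sub>m pauli n P)}"
    and V_Z: "\<forall>j\<le>dimq n. \<forall>a. 0 < a \<and> a < dimq n \<longrightarrow>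
                 (\<exists>P\<in>S j. \<exists>c. cmod c = 1 \<and> V j * Zop n a * adj (V j) = c \<cdot>\<^sub>m pauli n P)"
    and rho: "\<rho> \<in> carrier_mat (dimq n) (dimq n)"
  shows "depol n f \<rho> = f \<cdot>\<^sub>m \<rho> + (1 - f) \<cdot>\<^sub>m twirl_V n V (meas_M n) \<rho>"
proof (rule eq_matI)
  fix r s assume "r < dim_row (f \<cdot>\<^sub>m \<rho> + (1 - f) \<cdot>\<^sub>m twirl_V n V (meas_M n) \<rho>)"
    and "s < dim_col (f \<cdot>\<^sub>m \<rho> + (1 - f) \<cdot>\<^sub>m twirl_V n V (meas_M n) \<rho>)"
  then have r: "r < dimq n" and s: "s < dimq n" using rho by simp_all
  show "depol n f \<rho> $$ (r,s) = (f \<cdot>\<^sub>m \<rho> + (1 - f) \<cdot>\<^sub>m twirl_V n V (meas_M n) \<rho>) $$ (r,s)"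
    using r s rho
    by (simp add: depol_def twirl_V_meas_M_entry[OF assms r s] del: index_mult_mat(1))
qed (use rho in \<open>simp_all add: depol_def\<close>)

theorem theorem1:
  fixes n K :: nat and p :: "nat \<Rightarrow> real" and U V :: "nat \<Rightarrow> complex mat"
    and C :: "complex mat \<Rightarrow> complex mat" and S :: "nat \<Rightarrow> (nat \<times> nat) set"
  assumes n: "n \<ge> 1"
    and chan: "channel n C"
    and F_nz: "ent_fid n C \<noteq> 0"
    and ens_p: "\<forall>i<K. p i \<ge> 0" and ens_sum: "(\<Sum>i<K. p i) = 1"
    and ens_U: "\<forall>i<K. unitary_q n (U i)"
    and twirl_depol: "\<forall>\<rho> \<in> carrier_mat (dimq n) (dimq n).
                        twirl n K p U C \<rho> = depol n (ent_fid n C) \<rho>"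
    and S_sub: "\<forall>j\<le>dimq n. S j \<subseteq> Qstar n"
    and S_disj: "\<forall>j\<le>dimq n. \<forall>j'\<le>dimq n. j \<noteq> j' \<longrightarrow> S j \<inter> S j' = {}"
    and S_cover: "(\<Union>j\<le>dimq n. S j) = Qstar n"
    and S_card: "\<forall>j\<le>dimq n. card (S j) = dimq n - 1"
    and S_comm: "\<forall>j\<le>dimq n. \<forall>P\<in>S j. \<forall>Q\<in>S j. pauli n P * pauli n Q = pauli n Q * pauli n P"
    and S_max: "\<forall>j\<le>dimq n. \<forall>Q\<in>Qstar n - S j. \<exists>P\<in>S j.
                   pauli n P * pauli n Q \<noteq> pauli n Q * pauli n P"
    and V_unit: "\<forall>j\<le>dimq n. unitary_q n (V j)"
    and V_S: "\<forall>j\<le>dimq n. S j = {P \<in> Qstar n. \<exists>a. 0 < a \<and> a < dimq n \<and>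
                 (\<exists>c. cmod c = 1 \<and> V j * Zop n a * adj (V j) = c \<cdot>\<^sub>m pauli n P)}"
    and V_Z: "\<forall>j\<le>dimq n. \<forall>a. 0 < a \<and> a < dimq n \<longrightarrow>
                 (\<exists>P\<in>S j. \<exists>c. cmod c = 1 \<and> V j * Zop n a * adj (V j) = c \<cdot>\<^sub>m pauli n P)"
  shows "\<forall>\<rho> \<in> carrier_mat (dimq n) (dimq n).
           \<rho> = (1 / ent_fid n C) \<cdot>\<^sub>m twirl n K p U C \<rho>
               - (1 / ent_fid n C - 1) \<cdot>\<^sub>m twirl_V n V (meas_M n) \<rho>"
proof
  fix \<rho> :: "complex mat" assume rho: "\<rho> \<in> carrier_mat (dimq n) (dimq n)"
  have E: "twirl_V n V (meas_M n) \<rho> \<in> carrier_mat (dimq n) (dimq n)"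
    by (rule carrier_matI) simp_all
  have twirl_eq: "twirl n K p U C \<rho>
      = ent_fid n C \<cdot>\<^sub>m \<rho> + (1 - ent_fid n C) \<cdot>\<^sub>m twirl_V n V (meas_M n) \<rho>"
    using twirl_depol rho depol_eq_mixture_twirl_V_meas_M[OF n S_disj S_cover S_card V_unit V_S V_Z rho]
    by simp
  show "\<rho> = (1 / ent_fid n C) \<cdot>\<^sub>m twirl n K p U C \<rho>
      - (1 / ent_fid n C - 1) \<cdot>\<^sub>m twirl_V n V (meas_M n) \<rho>"
    unfolding twirl_eq by (rule mixture_inversion_mat[OF F_nz rho E])
qed

end
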